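(* Let $\mu \in \mathbb{N}$ and let $J_2 = \begin{bmatrix} 0 & 1 \\ 0 & 0 \end{bmatrix}$. Then $J_2^{(\mu)} = J_2 \oplus \cdots \oplus J_2$ ($\mu$ summands) acting on $\mathbb{C}^{2\mu}$ can be written as $MN - NM$ with $M, N \in \mathcal{B}(\mathbb{C}^{2\mu})$, $M^2 = 0 = N^2$, if and only if $\mu$ is even. *)

theory Defs
  imports Complex_Main "Jordan_Normal_Form.Matrix"
begin

definition J2 :: "complex mat" where
  "J2 = mat_of_rows_list 2 [[0, 1], [0, 0]]"

definition J2_pow :: "nat \<Rightarrow> complex mat" where
  "J2_pow mu = diag_block_mat (replicate mu J2)"

end

theory Submission
  imports Defs "Jordan_Normal_Form.Schur_Decomposition"
begin

(* Let T = J2_pow mu and let L be its transpose, so that T L T = T, L T + T L = 1 and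
   tr (T L) = mu.  If T = M N - N M with M^2 = N^2 = 0, then M and N anticommute with T, and
   P = (M - N) T L (M + N) L is idempotent, so tr P is a natural number (triangularise P).
   Inserting L T + T L = 1 and using cyclicity of the trace gives tr (T L) = 2 tr P, since the
   square-zero matrices M T L M L and N T L N L have trace zero.  Hence mu is even.
   Conversely, in terms of 4 x 4 matrix units, M = E13 - E24 and N = E32 square to zero and
   M N - N M = E12 + E34 = J2 (+) J2; block diagonal copies of them cover every even mu. *)

definition trace :: "'a::comm_ring_1 mat \<Rightarrow> 'a" where
  "trace A = (\<Sum>i<dim_row A. A $$ (i, i))"

lemma trace_mult_comm:
  fixes A B :: "'a::comm_ring_1 mat"
  assumes "A \<in> carrier_mat n m" "B \<in> carrier_mat m n"
  shows "trace (A * B) = trace (B * A)"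
proof -
  have "trace (A * B) = (\<Sum>i<n. \<Sum>k<m. A $$ (i, k) * B $$ (k, i))"
    using assms by (auto simp: trace_def scalar_prod_def atLeast0LessThan intro!: sum.cong)
  also have "\<dots> = (\<Sum>k<m. \<Sum>i<n. B $$ (k, i) * A $$ (i, k))"
    by (subst sum.swap) (simp add: mult.commute)
  also have "\<dots> = trace (B * A)"
    using assms by (auto simp: trace_def scalar_prod_def atLeast0LessThan intro!: sum.cong)
  finally show ?thesis .
qed

lemma trace_add:
  "A \<in> carrier_mat n n \<Longrightarrow> B \<in> carrier_mat n n \<Longrightarrow> trace (A + B) = trace A + trace B"
  by (simp add: trace_def sum.distrib)

lemma trace_minus:
  "A \<in> carrier_mat n n \<Longrightarrow> B \<in> carrier_mat n n \<Longrightarrow> trace (A - B) = trace A - trace B"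
  by (simp add: trace_def sum_subtractf)

lemma sum_lessThan_add: "(\<Sum>i<a + b. f i) = (\<Sum>i<a. f i) + (\<Sum>i<b. f (a + i))"
  for b :: nat
  by (induct b) (simp_all add: add.assoc)

lemma trace_four_block_mat:
  assumes "A \<in> carrier_mat n1 n1" "D \<in> carrier_mat n2 n2"
  shows "trace (four_block_mat A B C D) = trace A + trace D"
  using assms by (simp add: trace_def sum_lessThan_add)

lemma trace_similar_mat_wit:
  assumes "similar_mat_wit A B P Q"
  shows "trace A = trace B"
proof -
  define n where "n = dim_row A"
  note wit = similar_mat_witD[OF n_def assms]
  have "trace A = trace (P * (B * Q))" using wit by simp
  also have "\<dots> = trace (B * Q * P)" using wit by (simp add: trace_mult_comm[of P n n])
  also have "\<dots> = trace B" using wit by simp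
  finally show ?thesis .
qed

section \<open>Traces of idempotent and square-zero matrices\<close>

lemma upper_triangular_mult_diag:
  fixes B C :: "'a::comm_ring_1 mat"
  assumes "B \<in> carrier_mat n n" "C \<in> carrier_mat n n" "upper_triangular B" "upper_triangular C" "i < n"
  shows "(B * C) $$ (i, i) = B $$ (i, i) * C $$ (i, i)"
proof -
  have "(B * C) $$ (i, i) = (\<Sum>k<n. B $$ (i, k) * C $$ (k, i))"
    using assms by (simp add: scalar_prod_def atLeast0LessThan)
  also have "\<dots> = (\<Sum>k\<in>{i}. B $$ (i, k) * C $$ (k, i))"
  proof (rule sum.mono_neutral_right)
    show "\<forall>k \<in> {..<n} - {i}. B $$ (i, k) * C $$ (k, i) = 0"
    proof
      fix k assume k: "k \<in> {..<n} - {i}"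
      then consider "k < i" | "i < k" by fastforce
      then show "B $$ (i, k) * C $$ (k, i) = 0"
        by cases (use assms k in \<open>auto simp: upper_triangular_def\<close>)
    qed
  qed (use assms in auto)
  finally show ?thesis by simp
qed

lemma similar_mat_wit_square:
  assumes wit: "similar_mat_wit A B P Q"
  shows "similar_mat_wit (A * A) (B * B) P Q"
proof -
  define n where "n = dim_row A"
  note facts = similar_mat_witD[OF n_def wit]
  have square: "X ^\<^sub>m 2 = X * X" if "X \<in> carrier_mat n n" for X
    using that by (simp add: numeral_2_eq_2)
  have "A * A = P * (B * B) * Q"
    using similar_mat_wit_pow_id[OF wit, of 2] facts by (simp only: square)
  then show ?thesis
    using facts by (intro similar_mat_witI) auto
qed

lemma upper_triangular_conjugate:
  fixes A :: "complex mat"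
  assumes A: "A \<in> carrier_mat n n"
  obtains B P Q where "B \<in> carrier_mat n n" "P \<in> carrier_mat n n" "Q \<in> carrier_mat n n"
    "upper_triangular B" "trace B = trace A" "B = Q * A * P" "B * B = Q * (A * A) * P"
proof -
  obtain es where "char_poly A = (\<Prod>e \<leftarrow> es. [:- e, 1:])"
    using char_poly_factorized[OF A] by blast
  then obtain B where "upper_triangular B" "similar_mat A B"
    using schur_decomposition_exists[OF A] by blast
  moreover from this obtain P Q where wit: "similar_mat_wit A B P Q"
    unfolding similar_mat_def by blast
  moreover have B: "B \<in> carrier_mat n n" and "P \<in> carrier_mat n n" "Q \<in> carrier_mat n n"
    using similar_mat_witD2[OF A wit] by auto
  moreover have "B = Q * A * P" and "B * B = Q * (A * A) * P"
    using similar_mat_witD2(3)[OF B similar_mat_wit_sym[OF wit]]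
      similar_mat_witD2(3)[OF _ similar_mat_wit_sym[OF similar_mat_wit_square[OF wit]]] B
    by auto
  ultimately show thesis
    using that trace_similar_mat_wit[OF wit] by metis
qed

lemma trace_idempotent_Nats:
  fixes A :: "complex mat"
  assumes A: "A \<in> carrier_mat n n" and idem: "A * A = A"
  shows "trace A \<in> \<nat>"
proof -
  obtain B P Q where B: "B \<in> carrier_mat n n" and ut: "upper_triangular B" and tr: "trace B = trace A"
    and "B = Q * A * P" "B * B = Q * (A * A) * P"
    using upper_triangular_conjugate[OF A] .
  then have "B * B = B" using idem by simp
  then have diag: "B $$ (i, i) \<in> {0, 1}" if "i < n" for i
    using upper_triangular_mult_diag[OF B B ut ut that] by (metis insert_iff mult_cancel_right1)
  have "trace B = (\<Sum>i \<in> {i. i < n \<and> B $$ (i, i) = 1}. 1)"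
    unfolding trace_def using B diag by (intro sum.mono_neutral_cong_right) auto
  then show ?thesis using tr by simp
qed

lemma trace_square_zero:
  fixes A :: "complex mat"
  assumes A: "A \<in> carrier_mat n n" and nil: "A * A = 0\<^sub>m n n"
  shows "trace A = 0"
proof -
  obtain B P Q where B: "B \<in> carrier_mat n n" and "P \<in> carrier_mat n n" "Q \<in> carrier_mat n n"
    and ut: "upper_triangular B" and tr: "trace B = trace A" and "B * B = Q * (A * A) * P"
    using upper_triangular_conjugate[OF A] .
  then have "B * B = 0\<^sub>m n n" using nil by simp
  then have "B $$ (i, i) = 0" if "i < n" for i
    using upper_triangular_mult_diag[OF B B ut ut that] that by simp
  then show ?thesis using tr B by (simp add: trace_def)
qed

lemma (in ring) m_assoc_subst:
  assumes "a \<otimes> b = c" "a \<in> carrier R" "b \<in> carrier R" "x \<in> carrier R"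
  shows "a \<otimes> (b \<otimes> x) = c \<otimes> x"
  using assms by (simp flip: m_assoc)

lemma (in ring) square_zero_anticommutes_commutator:
  assumes "z \<in> carrier R" "w \<in> carrier R" and "z \<otimes> z = \<zero>"
  shows "z \<otimes> (z \<otimes> w \<ominus> w \<otimes> z) = \<ominus> ((z \<otimes> w \<ominus> w \<otimes> z) \<otimes> z)"
    and "z \<otimes> (w \<otimes> z \<ominus> z \<otimes> w) = \<ominus> ((w \<otimes> z \<ominus> z \<otimes> w) \<otimes> z)"
  using assms by (simp_all add: ring_simprules m_assoc_subst[OF \<open>z \<otimes> z = \<zero>\<close>])

text \<open>For \<open>t = J2_pow mu\<close> the transpose of \<open>t\<close> is such an \<open>l\<close>.\<close>

locale inner_inverse = ring +
  fixes t l
  assumes t_closed [simp]: "t \<in> carrier R" and l_closed [simp]: "l \<in> carrier R"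
    and inner: "t \<otimes> l \<otimes> t = t" and anticommutator: "l \<otimes> t = \<one> \<ominus> t \<otimes> l"
begin

lemma t_l_t_mult: "x \<in> carrier R \<Longrightarrow> t \<otimes> (l \<otimes> (t \<otimes> x)) = t \<otimes> x"
proof -
  assume "x \<in> carrier R"
  then have "t \<otimes> (l \<otimes> (t \<otimes> x)) = t \<otimes> l \<otimes> t \<otimes> x" by (simp add: m_assoc)
  then show ?thesis by (simp only: inner)
qed

lemma t_square_zero: "t \<otimes> t = \<zero>"
proof -
  have "t \<otimes> (t \<otimes> l) = t \<ominus> t \<otimes> (l \<otimes> t)"
    by (simp add: anticommutator ring_simprules)
  also have "t \<otimes> (l \<otimes> t) = t"
    using inner by (simp add: m_assoc)
  finally have ttl: "t \<otimes> (t \<otimes> l) = \<zero>"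
    by (simp add: r_neg minus_eq)
  then have ttlx: "t \<otimes> (t \<otimes> (l \<otimes> x)) = \<zero>" if "x \<in> carrier R" for x
    using that by (simp flip: m_assoc)
  have "t \<otimes> t = t \<otimes> (t \<otimes> (l \<otimes> t)) \<oplus> t \<otimes> (t \<otimes> (t \<otimes> l))"
    by (simp add: anticommutator ring_simprules)
  then show ?thesis
    by (simp add: ttl ttlx)
qed

text \<open>These rules move every \<open>t\<close> to the left of every \<open>l\<close>; together with the
  anticommutation rules of the other factors, \<open>simp\<close> then normalises the products below.\<close>

lemmas t_l_rewrites =
  m_assoc_subst[OF anticommutator l_closed t_closed] t_l_t_mult
  m_assoc_subst[OF t_square_zero t_closed t_closed]

lemma sandwich_square_zero:
  assumes z: "z \<in> carrier R" and zz: "z \<otimes> z = \<zero>" and anti: "z \<otimes> t = \<ominus> (t \<otimes> z)"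
  shows "(z \<otimes> t \<otimes> l \<otimes> z \<otimes> l) \<otimes> (z \<otimes> t \<otimes> l \<otimes> z \<otimes> l) = \<zero>"
  using z by (simp add: ring_simprules t_l_rewrites m_assoc_subst[OF zz z z] m_assoc_subst[OF anti z t_closed])

lemma insert_anticommutator:
  assumes z: "z \<in> carrier R" "w \<in> carrier R" and anti: "w \<otimes> t = \<ominus> (t \<otimes> w)"
  shows "z \<otimes> w \<otimes> l = z \<otimes> t \<otimes> l \<otimes> w \<otimes> l \<ominus> z \<otimes> l \<otimes> w \<otimes> t \<otimes> l"
  using z by (simp add: ring_simprules t_l_rewrites m_assoc_subst[OF anti z(2) t_closed])

lemma commutator_idempotent:
  assumes m: "m \<in> carrier R" and n: "n \<in> carrier R"
    and mm: "m \<otimes> m = \<zero>" and nn: "n \<otimes> n = \<zero>" and t: "t = m \<otimes> n \<ominus> n \<otimes> m"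
  defines "p \<equiv> (m \<ominus> n) \<otimes> t \<otimes> l \<otimes> (m \<oplus> n) \<otimes> l"
  shows "p \<otimes> p = p"
proof -
  define x y where "x = m \<oplus> n" and "y = m \<ominus> n"
  have x: "x \<in> carrier R" and y: "y \<in> carrier R"
    using m n by (simp_all add: x_def y_def)
  have yx: "y \<otimes> x = t" and xy: "x \<otimes> y = \<ominus> t"
    using m n mm nn by (simp_all add: t x_def y_def ring_simprules m_assoc_subst[OF mm] m_assoc_subst[OF nn])
  have "m \<otimes> t = \<ominus> (t \<otimes> m)" "n \<otimes> t = \<ominus> (t \<otimes> n)"
    using square_zero_anticommutes_commutator(1)[OF m n mm]
      square_zero_anticommutes_commutator(2)[OF n m nn] by (simp_all add: t)
  then have xt: "x \<otimes> t = \<ominus> (t \<otimes> x)" and yt: "y \<otimes> t = \<ominus> (t \<otimes> y)"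
    using m n by (simp_all add: x_def y_def ring_simprules)
  have "p = y \<otimes> t \<otimes> l \<otimes> x \<otimes> l"
    by (simp add: p_def x_def y_def)
  then show ?thesis
    using x y by (simp add: ring_simprules t_l_rewrites m_assoc_subst[OF yx y x] m_assoc_subst[OF xy x y]
        m_assoc_subst[OF xt x t_closed] m_assoc_subst[OF yt y t_closed])
qed

end

section \<open>The trace of a commutator of square-zero matrices\<close>

lemma ring_mat_a_inv:
  assumes "A \<in> carrier_mat n n"
  shows "\<ominus>\<^bsub>ring_mat TYPE('a::comm_ring_1) n b\<^esub> A = - A"
proof -
  interpret ring "ring_mat TYPE('a) n b" by (rule ring_mat)
  show ?thesis
    using assms by (intro minus_equality) (simp_all add: ring_mat_simps)
qed

lemma ring_mat_a_minus:
  assumes "A \<in> carrier_mat n n" "B \<in> carrier_mat n n"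
  shows "A \<ominus>\<^bsub>ring_mat TYPE('a::comm_ring_1) n b\<^esub> B = A - B"
proof -
  interpret ring "ring_mat TYPE('a) n b" by (rule ring_mat)
  show ?thesis
    using assms by (simp add: minus_eq ring_mat_a_inv ring_mat_simps minus_add_uminus_mat)
qed

locale mat_inner_inverse =
  fixes n :: nat and T L :: "complex mat"
  assumes T_carrier [simp]: "T \<in> carrier_mat n n" and L_carrier [simp]: "L \<in> carrier_mat n n"
    and inner: "T * L * T = T" and anticommutator: "L * T = 1\<^sub>m n - T * L"
begin

lemmas square_mat_simps [simp] = mult_carrier_mat[of _ n n _ n] minus_carrier_mat[of _ n n]
  assoc_mult_mat[of _ n n _ n _ n] carrier_matD[of _ n n]

sublocale R: inner_inverse "ring_mat TYPE(complex) n ()" T L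
  by (intro inner_inverse.intro ring_mat inner_inverse_axioms.intro)
    (simp_all add: inner anticommutator ring_mat_simps ring_mat_a_minus)

lemmas ring_mat_ops = ring_mat_simps ring_mat_a_minus ring_mat_a_inv

lemma trace_insert_anticommutator:
  assumes Z: "Z \<in> carrier_mat n n" and W: "W \<in> carrier_mat n n" and WT: "W * T = - (T * W)"
  shows "trace (Z * W * L) = trace (Z * T * L * W * L) - trace (W * T * L * Z * L)"
proof -
  have "Z * W * L = Z * T * L * W * L - Z * L * W * T * L"
    using R.insert_anticommutator[of Z W] Z W WT by (simp add: ring_mat_ops)
  moreover have "trace (Z * L * (W * T * L)) = trace (W * T * L * (Z * L))"
    using Z W by (intro trace_mult_comm[of _ n n]) simp_all
  ultimately show ?thesis
    using Z W by (simp add: trace_minus[of _ n])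
qed

lemma trace_sandwich_square_zero:
  assumes Z: "Z \<in> carrier_mat n n" and ZZ: "Z * Z = 0\<^sub>m n n" and ZT: "Z * T = - (T * Z)"
  shows "trace (Z * T * L * Z * L) = 0"
  using R.sandwich_square_zero[of Z] Z ZZ ZT
  by (intro trace_square_zero[of _ n]) (simp_all add: ring_mat_ops)

lemma trace_even_if_commutator_of_square_zeros:
  assumes M: "M \<in> carrier_mat n n" and N: "N \<in> carrier_mat n n"
    and MM: "M * M = 0\<^sub>m n n" and NN: "N * N = 0\<^sub>m n n" and T: "T = M * N - N * M"
  shows "\<exists>k. trace (T * L) = of_nat (2 * k)"
proof -
  have MT: "M * T = - (T * M)" and NT: "N * T = - (T * N)"
    using R.square_zero_anticommutes_commutator(1)[of M N] R.square_zero_anticommutes_commutator(2)[of N M]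
      M N MM NN by (simp_all add: T ring_mat_ops)
  define P where "P = (M - N) * T * L * (M + N) * L"
  have "P * P = P"
    using R.commutator_idempotent[of M N] M N MM NN by (simp add: P_def T ring_mat_ops)
  then obtain k where k: "trace P = of_nat k"
    using trace_idempotent_Nats[of P n] M N by (auto simp: P_def elim: Nats_cases)
  have "trace P = trace (M * T * L * M * L) + trace (M * T * L * N * L)
      - trace (N * T * L * M * L) - trace (N * T * L * N * L)"
    using M N by (simp add: P_def trace_add[of _ n] trace_minus[of _ n] minus_mult_distrib_mat[of _ n n _ _ n]
        mult_add_distrib_mat[of _ n n _ n] add_mult_distrib_mat[of _ n n _ _ n])
  also have "\<dots> = trace (M * T * L * N * L) - trace (N * T * L * M * L)"
    using trace_sandwich_square_zero M MM MT N NN NT by simp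
  finally have "trace (T * L) = 2 * trace P"
    using trace_insert_anticommutator[OF M N NT] trace_insert_anticommutator[OF N M MT] M N
    by (simp add: T trace_minus[of _ n] minus_mult_distrib_mat[of _ n n _ _ n])
  with k show ?thesis
    by (intro exI[of _ k]) simp
qed

end

section \<open>Block diagonal matrices\<close>

lemma diag_block_mat_replicate_carrier:
  "A \<in> carrier_mat m m \<Longrightarrow> diag_block_mat (replicate k A) \<in> carrier_mat (k * m) (k * m)"
  by (induct k) (auto simp: Let_def carrier_matD)

lemma diag_block_mat_replicate_Suc:
  assumes "A \<in> carrier_mat m m"
  shows "diag_block_mat (replicate (Suc k) A) =
    four_block_mat A (0\<^sub>m m (k * m)) (0\<^sub>m (k * m) m) (diag_block_mat (replicate k A))"
  using diag_block_mat_replicate_carrier[OF assms, of k] assms by (simp add: Let_def carrier_matD)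

lemma diag_block_mat_replicate_mult:
  fixes A B :: "'a::comm_ring_1 mat"
  assumes A: "A \<in> carrier_mat m m" and B: "B \<in> carrier_mat m m"
  shows "diag_block_mat (replicate k A) * diag_block_mat (replicate k B) = diag_block_mat (replicate k (A * B))"
proof (induct k)
  case (Suc k)
  have "A * B \<in> carrier_mat m m" using A B by simp
  then show ?case
    unfolding diag_block_mat_replicate_Suc[OF A] diag_block_mat_replicate_Suc[OF B]
      diag_block_mat_replicate_Suc[OF \<open>A * B \<in> carrier_mat m m\<close>]
    using A B Suc diag_block_mat_replicate_carrier[OF A, of k] diag_block_mat_replicate_carrier[OF B, of k]
      diag_block_mat_replicate_carrier[OF \<open>A * B \<in> carrier_mat m m\<close>, of k]
    by (subst mult_four_block_mat[of _ m m _ "k * m" _ "k * m"]) (auto simp: carrier_matD)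
qed (auto intro!: eq_matI)

lemma diag_block_mat_replicate_minus:
  fixes A B :: "'a::comm_ring_1 mat"
  assumes A: "A \<in> carrier_mat m m" and B: "B \<in> carrier_mat m m"
  shows "diag_block_mat (replicate k A) - diag_block_mat (replicate k B) = diag_block_mat (replicate k (A - B))"
proof (induct k)
  case (Suc k)
  have "A - B \<in> carrier_mat m m" using B by (rule minus_carrier_mat)
  then show ?case
    unfolding diag_block_mat_replicate_Suc[OF A] diag_block_mat_replicate_Suc[OF B]
      diag_block_mat_replicate_Suc[OF \<open>A - B \<in> carrier_mat m m\<close>] Suc[symmetric]
    using A B diag_block_mat_replicate_carrier[OF A, of k] diag_block_mat_replicate_carrier[OF B, of k]
    by (intro eq_matI) auto
qed (auto intro!: eq_matI)

lemma diag_block_mat_replicate_zero: "diag_block_mat (replicate k (0\<^sub>m m m)) = 0\<^sub>m (k * m) (k * m)"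
  by (induct k) (auto simp: diag_block_mat_replicate_Suc intro!: eq_matI)

lemma diag_block_mat_replicate_one: "diag_block_mat (replicate k (1\<^sub>m m)) = 1\<^sub>m (k * m)"
  by (induct k) (auto simp: diag_block_mat_replicate_Suc intro!: eq_matI)

lemma trace_diag_block_mat_replicate:
  assumes A: "A \<in> carrier_mat m m"
  shows "trace (diag_block_mat (replicate k A)) = of_nat k * trace A"
proof (induct k)
  case (Suc k)
  then show ?case
    unfolding diag_block_mat_replicate_Suc[OF A]
    using A diag_block_mat_replicate_carrier[OF A, of k] by (simp add: trace_four_block_mat algebra_simps)
qed (simp add: trace_def)

lemma diag_block_mat_concat: "diag_block_mat (concat Ass) = diag_block_mat (map diag_block_mat Ass)"
  by (induct Ass) (simp_all add: diag_block_mat_append Let_def)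

lemma J2_eq_mat: "J2 = mat 2 2 (\<lambda>(i, j). if (i, j) = (0, 1) then 1 else 0)"
  unfolding J2_def by (rule eq_matI) (auto simp: mat_of_rows_list_def less_2_cases_iff)

lemma J2_carrier: "J2 \<in> carrier_mat 2 2"
  by (simp add: J2_eq_mat)

lemma J2_transpose_inner: "J2 * transpose_mat J2 * J2 = J2"
  using J2_carrier by (intro eq_matI)
    (auto simp: J2_eq_mat scalar_prod_def numeral_2_eq_2 atLeast0LessThan lessThan_Suc less_2_cases_iff)

lemma J2_transpose_anticommutator: "transpose_mat J2 * J2 = 1\<^sub>m 2 - J2 * transpose_mat J2"
  using J2_carrier by (intro eq_matI)
    (auto simp: J2_eq_mat scalar_prod_def numeral_2_eq_2 atLeast0LessThan lessThan_Suc less_2_cases_iff)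

lemma J2_transpose_trace: "trace (J2 * transpose_mat J2) = 1"
  by (simp add: trace_def J2_eq_mat scalar_prod_def numeral_2_eq_2 lessThan_Suc)

lemma J2_pow_inner_inverse:
  fixes mu :: nat
  defines "L \<equiv> diag_block_mat (replicate mu (transpose_mat J2))"
  shows "mat_inner_inverse (2 * mu) (J2_pow mu) L" and "trace (J2_pow mu * L) = of_nat mu"
proof -
  have J2t: "transpose_mat J2 \<in> carrier_mat 2 2" and J2J2t: "J2 * transpose_mat J2 \<in> carrier_mat 2 2"
    using J2_carrier by auto
  have TL: "J2_pow mu * L = diag_block_mat (replicate mu (J2 * transpose_mat J2))"
    unfolding J2_pow_def L_def by (rule diag_block_mat_replicate_mult[OF J2_carrier J2t])
  show "mat_inner_inverse (2 * mu) (J2_pow mu) L"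
  proof
    show "J2_pow mu \<in> carrier_mat (2 * mu) (2 * mu)" "L \<in> carrier_mat (2 * mu) (2 * mu)"
      using diag_block_mat_replicate_carrier[OF J2_carrier, of mu] diag_block_mat_replicate_carrier[OF J2t, of mu]
      by (simp_all add: J2_pow_def L_def mult.commute)
    show "J2_pow mu * L * J2_pow mu = J2_pow mu"
      unfolding TL unfolding J2_pow_def
      by (simp add: diag_block_mat_replicate_mult[OF J2J2t J2_carrier] J2_transpose_inner)
    have "L * J2_pow mu = diag_block_mat (replicate mu (1\<^sub>m 2)) - diag_block_mat (replicate mu (J2 * transpose_mat J2))"
      unfolding J2_pow_def L_def
      by (simp add: diag_block_mat_replicate_mult[OF J2t J2_carrier] diag_block_mat_replicate_minus[OF _ J2J2t]
          J2_transpose_anticommutator)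
    then show "L * J2_pow mu = 1\<^sub>m (2 * mu) - J2_pow mu * L"
      by (simp add: TL diag_block_mat_replicate_one mult.commute)
  qed
  show "trace (J2_pow mu * L) = of_nat mu"
    unfolding TL using trace_diag_block_mat_replicate[OF J2J2t, of mu] J2_transpose_trace by simp
qed

lemma J2_pow_double: "J2_pow (2 * k) = diag_block_mat (replicate k (diag_block_mat [J2, J2]))"
proof -
  have "concat (replicate k [J2, J2]) = replicate (2 * k) J2"
    by (induct k) auto
  then show ?thesis
    using diag_block_mat_concat[of "replicate k [J2, J2]"] by (simp add: J2_pow_def)
qed

definition M4 :: "complex mat" where
  "M4 = mat 4 4 (\<lambda>(i, j). if (i, j) = (0, 2) then 1 else if (i, j) = (1, 3) then -1 else 0)"

definition N4 :: "complex mat" where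
  "N4 = mat 4 4 (\<lambda>(i, j). if (i, j) = (2, 1) then 1 else 0)"

lemma less_4_iff: "(i::nat) < 4 \<longleftrightarrow> i = 0 \<or> i = 1 \<or> i = 2 \<or> i = 3"
  by auto

lemma sum_upto_4: "(\<Sum>k = 0..<4::nat. f k) = f 0 + f 1 + f 2 + (f 3 :: 'a::comm_monoid_add)"
  by (simp add: numeral_eq_Suc atLeast0LessThan lessThan_Suc ac_simps)

lemma M4_square: "M4 * M4 = 0\<^sub>m 4 4"
  by (intro eq_matI) (auto simp: M4_def scalar_prod_def sum_upto_4 less_4_iff)

lemma N4_square: "N4 * N4 = 0\<^sub>m 4 4"
  by (intro eq_matI) (auto simp: N4_def scalar_prod_def sum_upto_4 less_4_iff)

lemma M4_N4_commutator: "M4 * N4 - N4 * M4 = diag_block_mat [J2, J2]"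
  using J2_carrier by (intro eq_matI)
    (auto simp: M4_def N4_def J2_eq_mat Let_def scalar_prod_def sum_upto_4 less_4_iff)

lemma J2_pow_double_square_zero_commutator:
  "\<exists>M \<in> carrier_mat (4 * k) (4 * k). \<exists>N \<in> carrier_mat (4 * k) (4 * k).
     M * M = 0\<^sub>m (4 * k) (4 * k) \<and> N * N = 0\<^sub>m (4 * k) (4 * k) \<and> J2_pow (2 * k) = M * N - N * M"
proof -
  have M4: "M4 \<in> carrier_mat 4 4" and N4: "N4 \<in> carrier_mat 4 4"
    by (simp_all add: M4_def N4_def)
  define M N where "M = diag_block_mat (replicate k M4)" and "N = diag_block_mat (replicate k N4)"
  have "M \<in> carrier_mat (4 * k) (4 * k)" "N \<in> carrier_mat (4 * k) (4 * k)"
    using diag_block_mat_replicate_carrier[OF M4, of k] diag_block_mat_replicate_carrier[OF N4, of k]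
    by (simp_all add: M_def N_def mult.commute)
  moreover have "M * M = 0\<^sub>m (4 * k) (4 * k)" "N * N = 0\<^sub>m (4 * k) (4 * k)"
    by (simp_all add: M_def N_def diag_block_mat_replicate_mult[OF M4 M4] diag_block_mat_replicate_mult[OF N4 N4]
        M4_square N4_square diag_block_mat_replicate_zero mult.commute)
  moreover have "J2_pow (2 * k) = M * N - N * M"
  proof -
    have "J2_pow (2 * k) = diag_block_mat (replicate k (M4 * N4 - N4 * M4))"
      by (simp only: J2_pow_double M4_N4_commutator)
    also have "\<dots> = M * N - N * M"
      unfolding M_def N_def diag_block_mat_replicate_mult[OF M4 N4] diag_block_mat_replicate_mult[OF N4 M4]
      using M4 N4 by (intro diag_block_mat_replicate_minus[where m = 4, symmetric]) auto
    finally show ?thesis .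
  qed
  ultimately show ?thesis
    by blast
qed

theorem proposition3p06:
  fixes mu :: nat
  shows "(\<exists>M \<in> carrier_mat (2*mu) (2*mu). \<exists>N \<in> carrier_mat (2*mu) (2*mu).
            M * M = 0\<^sub>m (2*mu) (2*mu) \<and> N * N = 0\<^sub>m (2*mu) (2*mu) \<and>
            J2_pow mu = M * N - N * M)
         \<longleftrightarrow> even mu"
proof
  assume "\<exists>M \<in> carrier_mat (2*mu) (2*mu). \<exists>N \<in> carrier_mat (2*mu) (2*mu).
            M * M = 0\<^sub>m (2*mu) (2*mu) \<and> N * N = 0\<^sub>m (2*mu) (2*mu) \<and>
            J2_pow mu = M * N - N * M"
  then obtain M N where "M \<in> carrier_mat (2*mu) (2*mu)" "N \<in> carrier_mat (2*mu) (2*mu)"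
    "M * M = 0\<^sub>m (2*mu) (2*mu)" "N * N = 0\<^sub>m (2*mu) (2*mu)" "J2_pow mu = M * N - N * M"
    by blast
  then obtain k where "trace (J2_pow mu * diag_block_mat (replicate mu (transpose_mat J2))) = of_nat (2 * k)"
    using mat_inner_inverse.trace_even_if_commutator_of_square_zeros[OF J2_pow_inner_inverse(1)] by blast
  then have "mu = 2 * k"
    unfolding J2_pow_inner_inverse(2) by (simp only: of_nat_eq_iff)
  then show "even mu" by simp
next
  assume "even mu"
  then obtain k where "mu = 2 * k" by blast
  then show "\<exists>M \<in> carrier_mat (2*mu) (2*mu). \<exists>N \<in> carrier_mat (2*mu) (2*mu).
            M * M = 0\<^sub>m (2*mu) (2*mu) \<and> N * N = 0\<^sub>m (2*mu) (2*mu) \<and>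
            J2_pow mu = M * N - N * M"
    using J2_pow_double_square_zero_commutator[of k] by simp
qed

end
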